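(* Let $p\in[1,\infty]$ and let $(X,d,\mu)$ be an infinitesimally doubling metric measure space which is $p$-thick geodesic. Then $d=d_p$.
   Context: A metric measure space is a proper metric space with a Borel regular outer measure positive and finite on balls; infinitesimally doubling means $\limsup_{r\to0}\mu(B(x,2r))/\mu(B(x,r))<\infty$ for $\mu$-a.e. $x$. $\operatorname{Mod}_p\Gamma=\inf\int\rho^pd\mu$ (for $p<\infty$), $\operatorname{Mod}_\infty\Gamma=\inf\|\rho\|_{L^\infty}$, over Borel $\rho\ge0$ with $\int_\gamma\rho\ge1$ on $\Gamma$. $\Gamma(E,F;C)$ is the family of curves $\gamma:[0,1]\to X$ with $\gamma(0)\in E,\gamma(1)\in F,\ell(\gamma)\le Cd(\gamma(0),\gamma(1))$; $X$ is $p$-thick geodesic if $\operatorname{Mod}_p\Gamma(E,F;C)>0$ for all $C>1$ and all measurable $E,F$ of positive measure. With $\Gamma(E,F)$ the Lipschitz curves $[0,1]\to X$ from $E$ to $F$, $ess\ell_p(\Gamma):=\sup_{\operatorname{Mod}_p\Gamma_0=0}\inf\{\ell(\gamma):\gamma\in\Gamma\setminus\Gamma_0\}$ ($\inf\emptyset=\infty$), $d_p'(x,y):=\lim_{\delta\to0}ess\ell_p\Gamma(\bar B(x,\delta),\bar B(y,\delta))$, and $d_p(x,y):=\inf\{\sum_{i=1}^nd_p'(x_{i-1},x_i):x_0=x,x_n=y\}$. *)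

theory Defs
  imports "HOL-Analysis.Analysis" "HOL-Probability.Probability"
begin

text \<open>Curves are maps real => 'a, considered on [0,1].
  Length = total variation on an interval (possibly infinite).\<close>
definition var_on :: "(real \<Rightarrow> 'a::metric_space) \<Rightarrow> real \<Rightarrow> real \<Rightarrow> ennreal" where
  "var_on \<gamma> a b = (SUP ts \<in> {ts. sorted ts \<and> set ts \<subseteq> {a..b}}.
      ennreal (\<Sum>i<length ts - 1. dist (\<gamma> (ts ! i)) (\<gamma> (ts ! (i + 1)))))"

definition curve_length :: "(real \<Rightarrow> 'a::metric_space) \<Rightarrow> ennreal" where
  "curve_length \<gamma> = var_on \<gamma> 0 1"

definition arclen_param :: "(real \<Rightarrow> 'a::metric_space) \<Rightarrow> real \<Rightarrow> 'a" where
  "arclen_param \<gamma> s = \<gamma> (SOME t. t \<in> {0..1} \<and> var_on \<gamma> 0 t = ennreal s)"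

definition line_integral :: "('a::metric_space \<Rightarrow> ennreal) \<Rightarrow> (real \<Rightarrow> 'a) \<Rightarrow> ennreal" where
  "line_integral \<rho> \<gamma> =
     (\<integral>\<^sup>+ s \<in> {0..enn2real (curve_length \<gamma>)}. \<rho> (arclen_param \<gamma> s) \<partial>lborel)"

definition enn_powr :: "ennreal \<Rightarrow> real \<Rightarrow> ennreal" where
  "enn_powr x q = (if x = \<infinity> then \<infinity> else ennreal (enn2real x powr q))"

definition admissible :: "(real \<Rightarrow> 'a::metric_space) set \<Rightarrow> ('a \<Rightarrow> ennreal) \<Rightarrow> bool" where
  "admissible \<Gamma> \<rho> \<longleftrightarrow> \<rho> \<in> borel_measurable borel \<and> (\<forall>\<gamma>\<in>\<Gamma>. 1 \<le> line_integral \<rho> \<gamma>)"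

definition ess_sup_enn :: "'a measure \<Rightarrow> ('a \<Rightarrow> ennreal) \<Rightarrow> ennreal" where
  "ess_sup_enn M \<rho> = Inf {c. AE x in M. \<rho> x \<le> c}"

definition Mod :: "'a::metric_space measure \<Rightarrow> ennreal \<Rightarrow> (real \<Rightarrow> 'a) set \<Rightarrow> ennreal" where
  "Mod M p \<Gamma> = (if p = \<infinity> then Inf {ess_sup_enn M \<rho> | \<rho>. admissible \<Gamma> \<rho>}
                 else Inf {(\<integral>\<^sup>+ x. enn_powr (\<rho> x) (enn2real p) \<partial>M) | \<rho>. admissible \<Gamma> \<rho>})"

definition quasi_geod_curves :: "'a::metric_space set \<Rightarrow> 'a set \<Rightarrow> real \<Rightarrow> (real \<Rightarrow> 'a) set" where
  "quasi_geod_curves E F C = {\<gamma>. continuous_on {0..1} \<gamma> \<and> \<gamma> 0 \<in> E \<and> \<gamma> 1 \<in> F \<and>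
       curve_length \<gamma> \<le> ennreal (C * dist (\<gamma> 0) (\<gamma> 1))}"

definition lip_curves :: "'a::metric_space set \<Rightarrow> 'a set \<Rightarrow> (real \<Rightarrow> 'a) set" where
  "lip_curves E F = {\<gamma>. (\<exists>L. L-lipschitz_on {0..1} \<gamma>) \<and> \<gamma> 0 \<in> E \<and> \<gamma> 1 \<in> F}"

definition metric_measure_space :: "'a::metric_space measure \<Rightarrow> bool" where
  "metric_measure_space M \<longleftrightarrow> (\<forall>x\<in>space M. \<forall>r. compact (cball x r)) \<and> sets M = sets borel \<and>
     (\<forall>x r. r > 0 \<longrightarrow> 0 < emeasure M (ball x r) \<and> emeasure M (ball x r) < \<infinity>)"

definition infinitesimally_doubling :: "'a::metric_space measure \<Rightarrow> bool" where
  "infinitesimally_doubling M \<longleftrightarrow>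
     (AE x in M. Limsup (at_right (0::real)) (\<lambda>r. emeasure M (ball x (2 * r)) / emeasure M (ball x r)) < \<infinity>)"

definition p_thick_geodesic :: "'a::metric_space measure \<Rightarrow> ennreal \<Rightarrow> bool" where
  "p_thick_geodesic M p \<longleftrightarrow> (\<forall>C>1. \<forall>E\<in>sets (completion M). \<forall>F\<in>sets (completion M).
      0 < emeasure (completion M) E \<longrightarrow> 0 < emeasure (completion M) F \<longrightarrow>
      0 < Mod M p (quasi_geod_curves E F C))"

definition ess_length :: "'a::metric_space measure \<Rightarrow> ennreal \<Rightarrow> (real \<Rightarrow> 'a) set \<Rightarrow> ennreal" where
  "ess_length M p \<Gamma> = (SUP \<Gamma>0 \<in> {\<Gamma>0. Mod M p \<Gamma>0 = 0}. INF \<gamma> \<in> \<Gamma> - \<Gamma>0. curve_length \<gamma>)"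

definition dp' :: "'a::metric_space measure \<Rightarrow> ennreal \<Rightarrow> 'a \<Rightarrow> 'a \<Rightarrow> ennreal" where
  "dp' M p x y = Lim (at_right (0::real)) (\<lambda>\<delta>. ess_length M p (lip_curves (cball x \<delta>) (cball y \<delta>)))"

definition dp :: "'a::metric_space measure \<Rightarrow> ennreal \<Rightarrow> 'a \<Rightarrow> 'a \<Rightarrow> ennreal" where
  "dp M p x y = (INF xs \<in> {xs. 2 \<le> length xs \<and> hd xs = x \<and> last xs = y}.
       \<Sum>i<length xs - 1. dp' M p (xs ! i) (xs ! (i + 1)))"

end

theory Submission
  imports Defs
begin

(* Every curve joining the closed delta-balls around x and y has length at least
   d(x,y) - 2 delta, so d <= d_p'.  Conversely, by p-thickness the curves from B(x,delta)
   to B(y,delta) whose length is at most (1 + delta) times the distance of their endpoints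
   have positive p-modulus.  Reparametrised by arc length they become Lipschitz curves with
   the same endpoints, length and line integrals, so they cannot all lie in a family of
   modulus zero: the essential length of the Lipschitz curves between the closed delta-balls
   is at most (1 + delta)(d(x,y) + 2 delta).  Letting delta -> 0 gives d_p' = d, and the
   triangle inequality collapses the chain infimum defining d_p to d. *)

section \<open>Inscribed polygons and variation\<close>

fun polygon_length :: "('b \<Rightarrow> 'a::metric_space) \<Rightarrow> 'b list \<Rightarrow> real" where
  "polygon_length g [] = 0"
| "polygon_length g [x] = 0"
| "polygon_length g (x # y # zs) = dist (g x) (g y) + polygon_length g (y # zs)"

lemma sum_dist_eq_polygon_length:
  "(\<Sum>i<length ts - 1. dist (g (ts ! i)) (g (ts ! (i + 1)))) = polygon_length g ts"
proof (induction g ts rule: polygon_length.induct)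
  case (3 g x y zs)
  then show ?case
    by (simp add: sum.lessThan_Suc_shift del: sum.lessThan_Suc)
qed auto

lemma polygon_length_nonneg: "0 \<le> polygon_length g ts"
  by (induction g ts rule: polygon_length.induct) auto

lemma dist_le_polygon_length:
  "ts \<noteq> [] \<Longrightarrow> dist (g (hd ts)) (g (last ts)) \<le> polygon_length g ts"
proof (induction g ts rule: polygon_length.induct)
  case (3 g x y zs)
  then show ?case using dist_triangle[of "g x" "g (last (y # zs))" "g y"] by auto
qed auto

lemma polygon_length_append:
  "polygon_length g (xs @ y # ys) = polygon_length g (xs @ [y]) + polygon_length g (y # ys)"
  by (induction g xs rule: polygon_length.induct) auto

lemma polygon_length_append_ge:
  "polygon_length g xs + polygon_length g ys \<le> polygon_length g (xs @ ys)"
proof (cases "xs = [] \<or> ys = []")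
  case False
  then obtain xs' a b ys' where "xs = xs' @ [a]" "ys = b # ys'"
    by (metis list.exhaust rev_exhaust)
  then show ?thesis using polygon_length_append[of g xs' a "b # ys'"] by simp
qed auto

lemma polygon_length_insert_le:
  "polygon_length g (xs @ ys) \<le> polygon_length g (xs @ [z]) + polygon_length g (z # ys)"
proof (induction xs rule: induct_list012)
  case 1
  then show ?case by (cases ys) (auto simp: polygon_length_nonneg)
next
  case (2 a)
  then show ?case
    by (cases ys) (auto simp: polygon_length_nonneg dist_triangle[of "g a" _ "g z"])
next
  case (3 a b xs)
  then show ?case by simp
qed

lemma polygon_length_const: "set ts \<subseteq> {t} \<Longrightarrow> polygon_length g ts = 0"
  by (induction g ts rule: polygon_length.induct) auto

lemma polygon_length_const_append:
  "set xs \<subseteq> {t} \<Longrightarrow> xs \<noteq> [] \<Longrightarrow> polygon_length g (xs @ ys) = polygon_length g (t # ys)"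
proof (induction xs)
  case (Cons x xs)
  then show ?case by (cases xs; cases ys) auto
qed auto

lemma polygon_length_map: "polygon_length g (map h ts) = polygon_length (g \<circ> h) ts"
  by (induction "g \<circ> h" ts rule: polygon_length.induct) auto

lemma polygon_length_cong:
  "(\<And>x. x \<in> set ts \<Longrightarrow> g x = g' x) \<Longrightarrow> polygon_length g ts = polygon_length g' ts"
  by (induction g ts rule: polygon_length.induct) auto

lemma polygon_length_rev: "polygon_length g (rev ts) = polygon_length g ts"
proof (induction g ts rule: polygon_length.induct)
  case (3 g x y zs)
  then show ?case
    using polygon_length_append[of g "rev zs" y "[x]"] by (simp add: dist_commute)
qed auto

lemma polygon_length_le_lipschitz:
  assumes "K-lipschitz_on S g" "sorted ts" "set ts \<subseteq> S" "ts \<noteq> []"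
  shows "polygon_length g ts \<le> K * (last ts - hd ts)"
  using assms(2-)
proof (induction ts rule: induct_list012)
  case (3 x y zs)
  have "dist (g x) (g y) \<le> K * (y - x)"
    using lipschitz_onD[OF assms(1), of x y] 3(3-4) by (simp add: dist_real_def)
  then show ?case using 3 by (simp add: algebra_simps)
qed auto

lemma sorted_split_at:
  fixes ts :: "'a::linorder list"
  assumes "sorted ts"
  obtains xs ys where "ts = xs @ ys" "sorted xs" "sorted ys"
    "\<forall>x\<in>set xs. x \<le> b" "\<forall>y\<in>set ys. b \<le> y"
proof
  let ?xs = "takeWhile (\<lambda>x. x \<le> b) ts" and ?ys = "dropWhile (\<lambda>x. x \<le> b) ts"
  show "ts = ?xs @ ?ys" by simp
  then show "sorted ?xs" "sorted ?ys" using assms by (metis sorted_append)+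
  show "\<forall>x\<in>set ?xs. x \<le> b" by (auto dest: set_takeWhileD)
  show "\<forall>y\<in>set ?ys. b \<le> y"
  proof
    fix y assume y: "y \<in> set ?ys"
    then have "\<not> hd ?ys \<le> b" by (metis empty_iff empty_set hd_dropWhile)
    moreover have "hd ?ys \<le> y" using \<open>sorted ?ys\<close> y by (cases ?ys) auto
    ultimately show "b \<le> y" by simp
  qed
qed

lemma var_on_eq_SUP_polygon_length:
  "var_on g a b = (SUP ts \<in> {ts. sorted ts \<and> set ts \<subseteq> {a..b}}. ennreal (polygon_length g ts))"
  unfolding var_on_def sum_dist_eq_polygon_length ..

lemma polygon_length_le_var_on:
  "sorted ts \<Longrightarrow> set ts \<subseteq> {a..b} \<Longrightarrow> ennreal (polygon_length g ts) \<le> var_on g a b"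
  unfolding var_on_eq_SUP_polygon_length by (rule SUP_upper) auto

lemma var_on_leI:
  "(\<And>ts. sorted ts \<Longrightarrow> set ts \<subseteq> {a..b} \<Longrightarrow> ennreal (polygon_length g ts) \<le> c) \<Longrightarrow>
    var_on g a b \<le> c"
  unfolding var_on_eq_SUP_polygon_length by (rule SUP_least) auto

lemma dist_le_var_on: "a \<le> b \<Longrightarrow> ennreal (dist (g a) (g b)) \<le> var_on g a b"
  using polygon_length_le_var_on[of "[a, b]" a b g] by simp

lemma dist_le_curve_length: "ennreal (dist (g 0) (g 1)) \<le> curve_length g"
  unfolding curve_length_def by (rule dist_le_var_on) simp

lemma var_on_mono: "a' \<le> a \<Longrightarrow> b \<le> b' \<Longrightarrow> var_on g a b \<le> var_on g a' b'"
  by (rule var_on_leI, rule polygon_length_le_var_on) auto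

lemma var_on_same: "var_on g t t = 0"
  by (rule antisym, rule var_on_leI) (auto simp: polygon_length_const)

lemma var_on_superadditive:
  assumes "a \<le> b" "b \<le> c"
  shows "var_on g a b + var_on g b c \<le> var_on g a c"
proof -
  let ?P = "\<lambda>a b. {ts. sorted ts \<and> set ts \<subseteq> {a..b::real}}"
  have concat: "ennreal (polygon_length g xs) + ennreal (polygon_length g ys) \<le> var_on g a c"
    if "xs \<in> ?P a b" "ys \<in> ?P b c" for xs ys
  proof -
    have "ennreal (polygon_length g xs) + ennreal (polygon_length g ys)
        \<le> ennreal (polygon_length g (xs @ ys))"
      by (simp add: polygon_length_nonneg polygon_length_append_ge ennreal_plus[symmetric]
          del: ennreal_plus)
    also have "\<dots> \<le> var_on g a c"
      using that assms
      by (intro polygon_length_le_var_on) (auto simp: sorted_append subset_iff intro: order_trans)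
    finally show ?thesis .
  qed
  have ne: "?P a b \<noteq> {}" "?P b c \<noteq> {}" by (auto intro!: exI[of _ "[]"])
  have "var_on g a b + var_on g b c = (SUP xs \<in> ?P a b. ennreal (polygon_length g xs) + var_on g b c)"
    unfolding var_on_eq_SUP_polygon_length[of g a b] by (rule ennreal_SUP_add_left[symmetric, OF ne(1)])
  also have "\<dots> = (SUP xs \<in> ?P a b. SUP ys \<in> ?P b c.
      ennreal (polygon_length g xs) + ennreal (polygon_length g ys))"
    unfolding var_on_eq_SUP_polygon_length[of g b c] by (simp add: ennreal_SUP_add_right[OF ne(2)])
  also have "\<dots> \<le> var_on g a c"
    by (intro SUP_least concat)
  finally show ?thesis .
qed

lemma var_on_subadditive:
  assumes "a \<le> b" "b \<le> c"
  shows "var_on g a c \<le> var_on g a b + var_on g b c"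
proof (rule var_on_leI)
  fix ts assume ts: "sorted ts" "set ts \<subseteq> {a..c}"
  obtain xs ys where split: "ts = xs @ ys" "sorted xs" "sorted ys"
    "\<forall>x\<in>set xs. x \<le> b" "\<forall>y\<in>set ys. b \<le> y"
    using sorted_split_at[OF ts(1)] .
  have "ennreal (polygon_length g ts)
      \<le> ennreal (polygon_length g (xs @ [b])) + ennreal (polygon_length g (b # ys))"
    unfolding split(1) using polygon_length_insert_le
    by (simp add: polygon_length_nonneg ennreal_plus[symmetric] del: ennreal_plus)
  also have "\<dots> \<le> var_on g a b + var_on g b c"
    using split ts(2) assms
    by (intro add_mono polygon_length_le_var_on) (auto simp: sorted_append)
  finally show "ennreal (polygon_length g ts) \<le> var_on g a b + var_on g b c" .
qed

lemma var_on_add: "a \<le> b \<Longrightarrow> b \<le> c \<Longrightarrow> var_on g a c = var_on g a b + var_on g b c"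
  by (metis antisym var_on_subadditive var_on_superadditive)

lemma var_on_le_lipschitz:
  assumes "K-lipschitz_on {a..b} g"
  shows "var_on g a b \<le> ennreal (K * (b - a))"
proof (rule var_on_leI)
  fix ts assume ts: "sorted ts" "set ts \<subseteq> {a..b}"
  show "ennreal (polygon_length g ts) \<le> ennreal (K * (b - a))"
  proof (cases "ts = []")
    case False
    have "polygon_length g ts \<le> K * (last ts - hd ts)"
      using polygon_length_le_lipschitz[OF assms ts False] .
    also have "\<dots> \<le> K * (b - a)"
    proof (rule mult_left_mono)
      have "last ts \<le> b" "a \<le> hd ts"
        using ts(2) last_in_set[OF False] hd_in_set[OF False] by auto
      then show "last ts - hd ts \<le> b - a" by simp
    qed (rule lipschitz_on_nonneg[OF assms])
    finally show ?thesis by (rule ennreal_leI)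
  qed simp
qed

lemma var_on_le_reparam:
  assumes "mono_on {a..b} h" "h ` {a..b} \<subseteq> {c..d}" "\<And>t. t \<in> {a..b} \<Longrightarrow> \<gamma> (h t) = g t"
  shows "var_on g a b \<le> var_on \<gamma> c d"
proof (rule var_on_leI)
  fix ts assume ts: "sorted ts" "set ts \<subseteq> {a..b}"
  have "polygon_length g ts = polygon_length (\<gamma> \<circ> h) ts"
    using ts(2) assms(3) by (intro polygon_length_cong) auto
  also have "\<dots> = polygon_length \<gamma> (map h ts)"
    by (rule polygon_length_map[symmetric])
  also have "ennreal \<dots> \<le> var_on \<gamma> c d"
  proof (rule polygon_length_le_var_on)
    show "sorted (map h ts)"
      unfolding sorted_map using ts
      by (auto intro: sorted_wrt_mono_rel[of _ "(\<le>)"] mono_onD[OF assms(1)])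
    show "set (map h ts) \<subseteq> {c..d}" using ts(2) assms(2) by auto
  qed
  finally show "ennreal (polygon_length g ts) \<le> var_on \<gamma> c d" .
qed

lemma var_on_reflect_le: "var_on g a b \<le> var_on (\<lambda>t. g (c - t)) (c - b) (c - a)"
proof (rule var_on_leI)
  fix ts assume ts: "sorted ts" "set ts \<subseteq> {a..b}"
  have "polygon_length g ts = polygon_length (\<lambda>t. g (c - t)) (rev (map (\<lambda>t. c - t) ts))"
    by (simp add: polygon_length_rev polygon_length_map comp_def)
  also have "ennreal \<dots> \<le> var_on (\<lambda>t. g (c - t)) (c - b) (c - a)"
  proof (rule polygon_length_le_var_on)
    have "sorted_wrt (\<lambda>x y. c - y \<le> c - x) ts"
      using ts(1) by (rule sorted_wrt_mono_rel[rotated]) simp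
    then show "sorted (rev (map (\<lambda>t. c - t) ts))"
      by (simp only: sorted_wrt_rev sorted_wrt_map)
    show "set (rev (map (\<lambda>t. c - t) ts)) \<subseteq> {c - b..c - a}" using ts(2) by auto
  qed
  finally show "ennreal (polygon_length g ts) \<le> var_on (\<lambda>t. g (c - t)) (c - b) (c - a)" .
qed

lemma var_on_reflect: "var_on (\<lambda>t. g (c - t)) a b = var_on g (c - b) (c - a)"
  using var_on_reflect_le[of "\<lambda>t. g (c - t)" a b c] var_on_reflect_le[of g "c - b" "c - a" c]
  by (simp add: antisym)

section \<open>Arc-length parametrisation\<close>

locale rectifiable_curve =
  fixes g :: "real \<Rightarrow> 'a::metric_space"
  assumes continuous: "continuous_on {0..1} g" and finite_length: "curve_length g \<noteq> \<infinity>"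
begin

definition len :: "real \<Rightarrow> real \<Rightarrow> real" where
  "len a b = enn2real (var_on g a b)"

lemma var_on_finite: "0 \<le> a \<Longrightarrow> b \<le> 1 \<Longrightarrow> var_on g a b < \<infinity>"
  using var_on_mono[of 0 a b 1 g] finite_length by (auto simp: curve_length_def less_top top_unique)

lemma var_on_eq_len: "0 \<le> a \<Longrightarrow> b \<le> 1 \<Longrightarrow> var_on g a b = ennreal (len a b)"
  using var_on_finite by (simp add: len_def)

lemma len_nonneg: "0 \<le> len a b"
  by (simp add: len_def)

lemma len_same: "len t t = 0"
  by (simp add: len_def var_on_same)

lemma len_add: "0 \<le> a \<Longrightarrow> a \<le> b \<Longrightarrow> b \<le> c \<Longrightarrow> c \<le> 1 \<Longrightarrow> len a c = len a b + len b c"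
  unfolding len_def using var_on_add[of a b c g] var_on_finite[of a b] var_on_finite[of b c]
  by (simp add: enn2real_plus)

lemma len_mono: "0 \<le> a' \<Longrightarrow> a' \<le> a \<Longrightarrow> b \<le> b' \<Longrightarrow> b' \<le> 1 \<Longrightarrow> len a b \<le> len a' b'"
  unfolding len_def using var_on_mono[of a' a b b' g] var_on_finite[of a' b']
  by (intro enn2real_mono) auto

lemma polygon_length_le_len:
  "sorted ts \<Longrightarrow> set ts \<subseteq> {a..b} \<Longrightarrow> 0 \<le> a \<Longrightarrow> b \<le> 1 \<Longrightarrow> polygon_length g ts \<le> len a b"
  using polygon_length_le_var_on[of ts a b g] var_on_eq_len[of a b] len_nonneg[of a b]
  by (simp add: polygon_length_nonneg)

lemma dist_le_len: "0 \<le> a \<Longrightarrow> a \<le> b \<Longrightarrow> b \<le> 1 \<Longrightarrow> dist (g a) (g b) \<le> len a b"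
  using polygon_length_le_len[of "[a, b]" a b] by simp

lemma len_approx:
  assumes "0 \<le> a" "b \<le> 1" "e > 0"
  obtains ts where "sorted ts" "set ts \<subseteq> {a..b}" "len a b - e < polygon_length g ts"
proof (cases "len a b < e")
  case True
  then show ?thesis using that[of "[]"] by simp
next
  case False
  then have "ennreal (len a b - e) < var_on g a b"
    using var_on_eq_len[OF assms(1,2)] assms(3) by (simp add: ennreal_lessI)
  then obtain ts where "sorted ts" "set ts \<subseteq> {a..b}"
    "ennreal (len a b - e) < ennreal (polygon_length g ts)"
    unfolding var_on_eq_SUP_polygon_length by (auto simp: less_SUP_iff)
  then show ?thesis using that False by (simp add: ennreal_less_iff)
qed

lemma len_right_small:
  assumes t: "0 \<le> t" "t < 1" and e: "e > 0"
  obtains s where "t < s" "s \<le> 1" "len t s \<le> e"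
proof -
  obtain ts where ts: "sorted ts" "set ts \<subseteq> {t..1}" "len t 1 - e/2 < polygon_length g ts"
    using len_approx[of t 1 "e/2"] t e by auto
  obtain d where d: "d > 0" "\<And>x. x \<in> {0..1} \<Longrightarrow> dist x t < d \<Longrightarrow> dist (g x) (g t) < e/2"
    using continuous t e unfolding continuous_on_iff
    by (metis atLeastAtMost_iff half_gt_zero less_eq_real_def)
  \<comment> \<open>Choose \<open>s\<close> so close to \<open>t\<close> that no point of the near-optimal partition \<open>ts\<close> lies in
    \<open>(t, s]\<close>: inserting \<open>s\<close> then costs at most \<open>dist (g t) (g s) < e/2\<close>.\<close>
  define m where "m = Min (insert 1 {x \<in> set ts. t < x})"
  have "t < m" "m \<le> 1" and m_le: "\<And>x. x \<in> set ts \<Longrightarrow> t < x \<Longrightarrow> m \<le> x"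
    using t unfolding m_def by (auto simp: Min_gr_iff)
  define s where "s = min (t + d/2) ((t + m)/2)"
  have s: "t < s" "s \<le> 1" "dist s t < d"
    using \<open>t < m\<close> \<open>m \<le> 1\<close> d(1) unfolding s_def dist_real_def by (auto simp: min_def)
  have "s \<le> (t + m)/2" unfolding s_def by (rule min.cobounded2)
  have ts_gap: "x = t \<or> s < x" if "x \<in> set ts" for x
  proof -
    have "t \<le> x" using that ts(2) by auto
    moreover have "s < x" if "t < x"
      using m_le[OF \<open>x \<in> set ts\<close> that] \<open>t < m\<close> \<open>s \<le> (t + m)/2\<close> by argo
    ultimately show ?thesis by linarith
  qed
  obtain xs ys where split: "ts = xs @ ys" "sorted ys" "\<forall>x\<in>set xs. x \<le> s" "\<forall>y\<in>set ys. s \<le> y"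
    using sorted_split_at[OF ts(1), of s] by metis
  have "set xs \<subseteq> {t}"
    using split(1,3) ts_gap s(1) by (metis Un_iff insert_iff not_le set_append subsetI)
  have "polygon_length g (xs @ [s]) \<le> e/2"
  proof (cases "xs = []")
    case False
    then have "polygon_length g (xs @ [s]) = dist (g s) (g t)"
      using polygon_length_const_append[OF \<open>set xs \<subseteq> {t}\<close>, of g "[s]"] by (simp add: dist_commute)
    then show ?thesis using d(2)[of s] s t by simp
  qed (use e in simp)
  moreover have "polygon_length g (s # ys) \<le> len s 1"
    using split ts(2) s t by (intro polygon_length_le_len) auto
  moreover have "polygon_length g ts \<le> polygon_length g (xs @ [s]) + polygon_length g (s # ys)"
    unfolding split(1) by (rule polygon_length_insert_le)
  moreover have "len t 1 = len t s + len s 1" using len_add[of t s 1] s t by simp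
  ultimately have "len t s < e" using ts(3) by linarith
  with s that show ?thesis by simp
qed

lemma rectifiable_reflect: "rectifiable_curve (\<lambda>t. g (1 - t))"
proof
  show "continuous_on {0..1} (\<lambda>t. g (1 - t))"
    by (rule continuous_on_compose2[OF continuous]) (auto intro!: continuous_intros)
  show "curve_length (\<lambda>t. g (1 - t)) \<noteq> \<infinity>"
    using finite_length by (simp add: curve_length_def var_on_reflect)
qed

lemma len_left_small:
  assumes t: "0 < t" "t \<le> 1" and e: "e > 0"
  obtains s where "0 \<le> s" "s < t" "len s t \<le> e"
proof -
  obtain s' where "1 - t < s'" "s' \<le> 1" "rectifiable_curve.len (\<lambda>t. g (1 - t)) (1 - t) s' \<le> e"
    using rectifiable_curve.len_right_small[OF rectifiable_reflect, of "1 - t" e] t e by auto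
  then show ?thesis
    using that[of "1 - s'"]
    by (simp add: rectifiable_curve.len_def[OF rectifiable_reflect] len_def var_on_reflect)
qed

lemma continuous_on_len: "continuous_on {0..1} (len 0)"
  unfolding continuous_on_iff
proof (intro ballI allI impI)
  fix t e :: real assume t: "t \<in> {0..1}" and e: "0 < e"
  obtain d1 where d1: "d1 > 0" "\<And>x. t \<le> x \<Longrightarrow> x \<le> 1 \<Longrightarrow> x < t + d1 \<Longrightarrow> len t x < e"
  proof (cases "t = 1")
    case True
    then show ?thesis using that[of 1] e by (simp add: len_same)
  next
    case False
    then obtain s where s: "t < s" "s \<le> 1" "len t s \<le> e/2"
      using len_right_small[of t "e/2"] t e by auto
    show ?thesis
    proof (rule that[of "s - t"])
      fix x assume "t \<le> x" "x \<le> 1" "x < t + (s - t)"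
      then have "len t x \<le> len t s" using t s by (intro len_mono) auto
      then show "len t x < e" using s e by linarith
    qed (use s in simp)
  qed
  obtain d2 where d2: "d2 > 0" "\<And>x. 0 \<le> x \<Longrightarrow> x \<le> t \<Longrightarrow> t - d2 < x \<Longrightarrow> len x t < e"
  proof (cases "t = 0")
    case True
    then show ?thesis using that[of 1] e by (simp add: len_same)
  next
    case False
    then obtain s where s: "0 \<le> s" "s < t" "len s t \<le> e/2"
      using len_left_small[of t "e/2"] t e by auto
    show ?thesis
    proof (rule that[of "t - s"])
      fix x assume "0 \<le> x" "x \<le> t" "t - (t - s) < x"
      then have "len x t \<le> len s t" using t s by (intro len_mono) auto
      then show "len x t < e" using s e by linarith
    qed (use s in simp)
  qed
  show "\<exists>d>0. \<forall>x\<in>{0..1}. dist x t < d \<longrightarrow> dist (len 0 x) (len 0 t) < e"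
  proof (intro exI[of _ "min d1 d2"] conjI ballI impI)
    fix x assume x: "x \<in> {0..1}" "dist x t < min d1 d2"
    show "dist (len 0 x) (len 0 t) < e"
    proof (cases "t \<le> x")
      case True
      then show ?thesis using len_add[of 0 t x] d1(2)[of x] x t len_nonneg[of t x]
        by (simp add: dist_real_def)
    next
      case False
      then show ?thesis using len_add[of 0 x t] d2(2)[of x] x t len_nonneg[of x t]
        by (simp add: dist_real_def)
    qed
  qed (use d1 d2 in simp)
qed

lemma len_surj:
  assumes "0 \<le> s" "s \<le> len 0 1"
  obtains t where "t \<in> {0..1}" "len 0 t = s"
  using IVT'[of "len 0" 0 s 1] continuous_on_len assms that by (auto simp: len_same)

lemma dist_le_len_diff:
  assumes "t1 \<in> {0..1}" "t2 \<in> {0..1}"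
  shows "dist (g t1) (g t2) \<le> \<bar>len 0 t1 - len 0 t2\<bar>"
proof -
  have *: "dist (g a) (g b) \<le> \<bar>len 0 a - len 0 b\<bar>" if "0 \<le> a" "a \<le> b" "b \<le> 1" for a b
    using len_add[of 0 a b] dist_le_len[of a b] that by simp
  show ?thesis
    using *[of t1 t2] *[of t2 t1] assms by (cases "t1 \<le> t2") (auto simp: dist_commute abs_minus_commute)
qed

lemma eq_if_len_eq: "t1 \<in> {0..1} \<Longrightarrow> t2 \<in> {0..1} \<Longrightarrow> len 0 t1 = len 0 t2 \<Longrightarrow> g t1 = g t2"
  using dist_le_len_diff[of t1 t2] by simp

lemma arclen_param_len:
  assumes "t \<in> {0..1}"
  shows "arclen_param g (len 0 t) = g t"
proof -
  let ?P = "\<lambda>t'. t' \<in> {0..1} \<and> var_on g 0 t' = ennreal (len 0 t)"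
  have "?P t" using assms var_on_eq_len[of 0 t] by simp
  then have "?P (SOME t'. ?P t')" by (rule someI)
  then have "g (SOME t'. ?P t') = g t"
    using assms var_on_eq_len len_nonneg by (intro eq_if_len_eq) auto
  then show ?thesis unfolding arclen_param_def .
qed

lemma arclen_param_lipschitz: "1-lipschitz_on {0..len 0 1} (arclen_param g)"
proof (rule lipschitz_onI)
  fix s1 s2 assume "s1 \<in> {0..len 0 1}" "s2 \<in> {0..len 0 1}"
  then obtain t1 t2 where "t1 \<in> {0..1}" "len 0 t1 = s1" "t2 \<in> {0..1}" "len 0 t2 = s2"
    using len_surj by (metis atLeastAtMost_iff)
  then show "dist (arclen_param g s1) (arclen_param g s2) \<le> 1 * dist s1 s2"
    using dist_le_len_diff[of t1 t2] by (auto simp: arclen_param_len dist_real_def)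
qed simp

lemma var_on_arclen_param:
  assumes s: "s \<in> {0..len 0 1}"
  shows "var_on (arclen_param g) 0 s = ennreal s"
proof (rule antisym)
  have "1-lipschitz_on {0..s} (arclen_param g)"
    using arclen_param_lipschitz by (rule lipschitz_on_subset) (use s in auto)
  then show "var_on (arclen_param g) 0 s \<le> ennreal s"
    using var_on_le_lipschitz by fastforce
  obtain t where t: "t \<in> {0..1}" "len 0 t = s"
    using len_surj s by auto
  have "ennreal s = var_on g 0 t" using t var_on_eq_len by simp
  also have "\<dots> \<le> var_on (arclen_param g) 0 s"
  proof (rule var_on_le_reparam)
    show "mono_on {0..t} (len 0)" using t by (intro mono_onI len_mono) auto
    show "len 0 ` {0..t} \<subseteq> {0..s}" using t len_mono[of 0 0 _ t] len_nonneg by auto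
    show "arclen_param g (len 0 x) = g x" if "x \<in> {0..t}" for x
      using that t by (intro arclen_param_len) auto
  qed
  finally show "ennreal s \<le> var_on (arclen_param g) 0 s" .
qed

definition arclen_curve :: "real \<Rightarrow> 'a" where
  "arclen_curve u = arclen_param g (len 0 1 * u)"

lemma arclen_curve_lipschitz: "(len 0 1)-lipschitz_on {0..1} arclen_curve"
proof -
  have "1-lipschitz_on ((\<lambda>u. len 0 1 * u) ` {0..1}) (arclen_param g)"
    using arclen_param_lipschitz
    by (rule lipschitz_on_subset) (auto simp: len_nonneg mult_right_le_one_le)
  moreover have "(len 0 1 * 1)-lipschitz_on {0..1} (\<lambda>u. len 0 1 * u)"
    by (intro lipschitz_on_cmult_real_nonneg lipschitz_on_id len_nonneg)
  ultimately show ?thesis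
    using lipschitz_on_compose2 unfolding arclen_curve_def by fastforce
qed

lemma arclen_curve_ends: "arclen_curve 0 = g 0" "arclen_curve 1 = g 1"
  using arclen_param_len[of 0] arclen_param_len[of 1] by (simp_all add: arclen_curve_def len_same)

lemma var_on_arclen_curve:
  assumes u: "u \<in> {0..1}"
  shows "var_on arclen_curve 0 u = ennreal (len 0 1 * u)"
proof (rule antisym)
  have "(len 0 1)-lipschitz_on {0..u} arclen_curve"
    using arclen_curve_lipschitz by (rule lipschitz_on_subset) (use u in auto)
  then show "var_on arclen_curve 0 u \<le> ennreal (len 0 1 * u)"
    using var_on_le_lipschitz by fastforce
  show "ennreal (len 0 1 * u) \<le> var_on arclen_curve 0 u"
  proof (cases "len 0 1 = 0")
    case False
    then have L: "len 0 1 > 0" using len_nonneg[of 0 1] by simp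
    have "ennreal (len 0 1 * u) = var_on (arclen_param g) 0 (len 0 1 * u)"
      using u L by (simp add: var_on_arclen_param mult_left_le_one_le)
    also have "\<dots> \<le> var_on arclen_curve 0 u"
    proof (rule var_on_le_reparam)
      show "mono_on {0..len 0 1 * u} (\<lambda>s. s / len 0 1)"
        using L by (intro mono_onI divide_right_mono) auto
      show "(\<lambda>s. s / len 0 1) ` {0..len 0 1 * u} \<subseteq> {0..u}"
        using L by (auto simp: divide_le_eq mult.commute)
      show "arclen_curve (s / len 0 1) = arclen_param g s" for s
        using L by (simp add: arclen_curve_def)
    qed
    finally show ?thesis .
  qed simp
qed

lemma curve_length_arclen_curve: "curve_length arclen_curve = curve_length g"
  using var_on_arclen_curve[of 1] var_on_eq_len[of 0 1] by (simp add: curve_length_def)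

lemma arclen_param_arclen_curve:
  assumes s: "s \<in> {0..len 0 1}"
  shows "arclen_param arclen_curve s = arclen_param g s"
proof -
  let ?P = "\<lambda>u. u \<in> {0..1} \<and> var_on arclen_curve 0 u = ennreal s"
  obtain u where u: "u \<in> {0..1}" "len 0 1 * u = s"
  proof (cases "len 0 1 = 0")
    case True
    then show ?thesis using that[of 0] s by simp
  next
    case False
    then show ?thesis using that[of "s / len 0 1"] s len_nonneg[of 0 1] by auto
  qed
  then have "?P u" by (simp add: var_on_arclen_curve)
  then have "?P (SOME u. ?P u)" by (rule someI)
  then have "len 0 1 * (SOME u. ?P u) = s"
    using s by (auto simp: var_on_arclen_curve len_nonneg)
  then show ?thesis unfolding arclen_param_def[of arclen_curve] arclen_curve_def by simp
qed

lemma line_integral_arclen_curve: "line_integral \<rho> arclen_curve = line_integral \<rho> g"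
proof -
  have L: "enn2real (curve_length g) = len 0 1" by (simp add: curve_length_def len_def)
  show ?thesis
    unfolding line_integral_def curve_length_arclen_curve L
    by (intro nn_integral_cong) (simp add: arclen_param_arclen_curve split: split_indicator)
qed

end

lemma lipschitz_reparametrization:
  assumes "continuous_on {0..1} \<gamma>" "curve_length \<gamma> \<noteq> \<infinity>"
  obtains \<eta> where "\<exists>K. K-lipschitz_on {0..1} \<eta>" "\<eta> 0 = \<gamma> 0" "\<eta> 1 = \<gamma> 1"
    "curve_length \<eta> = curve_length \<gamma>" "\<And>\<rho>. line_integral \<rho> \<eta> = line_integral \<rho> \<gamma>"
proof -
  interpret rectifiable_curve \<gamma> using assms by unfold_locales
  show ?thesis
    using that arclen_curve_lipschitz arclen_curve_ends curve_length_arclen_curve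
      line_integral_arclen_curve by blast
qed

section \<open>Essential length and the metric \<open>d\<^sub>p\<close>\<close>

lemma Mod_empty: "Mod M p {} = 0"
proof -
  have adm: "admissible {} (\<lambda>_. 0)" by (simp add: admissible_def)
  have "Mod M p {} \<le>
      (if p = \<infinity> then ess_sup_enn M (\<lambda>_. 0) else \<integral>\<^sup>+ x. enn_powr 0 (enn2real p) \<partial>M)"
    unfolding Mod_def using adm by (auto intro: Inf_lower simp del: nn_integral_const)
  also have "\<dots> = 0" by (simp add: ess_sup_enn_def bot_ennreal enn_powr_def)
  finally show ?thesis by simp
qed

lemma Mod_mono_minorized:
  assumes "\<And>\<gamma>. \<gamma> \<in> \<Gamma> \<Longrightarrow> \<exists>\<eta>\<in>\<Gamma>'. \<forall>\<rho>. line_integral \<rho> \<eta> \<le> line_integral \<rho> \<gamma>"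
  shows "Mod M p \<Gamma> \<le> Mod M p \<Gamma>'"
proof -
  have "admissible \<Gamma> \<rho>" if "admissible \<Gamma>' \<rho>" for \<rho>
    using that assms unfolding admissible_def by (meson order_trans)
  then show ?thesis
    unfolding Mod_def by (auto intro!: Inf_superset_mono)
qed

lemma Inf_curve_length_le_ess_length: "(INF \<gamma>\<in>\<Gamma>. curve_length \<gamma>) \<le> ess_length M p \<Gamma>"
  unfolding ess_length_def by (rule SUP_upper2[of "{}"]) (simp_all add: Mod_empty)

lemma ess_length_le_if_Mod_pos:
  assumes "0 < Mod M p \<Gamma>'"
    and "\<And>\<gamma>. \<gamma> \<in> \<Gamma>' \<Longrightarrow>
      \<exists>\<eta>\<in>\<Gamma>. curve_length \<eta> \<le> B \<and> (\<forall>\<rho>. line_integral \<rho> \<eta> = line_integral \<rho> \<gamma>)"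
  shows "ess_length M p \<Gamma> \<le> B"
  unfolding ess_length_def
proof (rule SUP_least)
  fix \<Gamma>0 assume "\<Gamma>0 \<in> {\<Gamma>0. Mod M p \<Gamma>0 = 0}"
  then have null: "Mod M p \<Gamma>0 = 0" by simp
  show "(INF \<gamma> \<in> \<Gamma> - \<Gamma>0. curve_length \<gamma>) \<le> B"
  proof (rule ccontr)
    assume "\<not> (INF \<gamma> \<in> \<Gamma> - \<Gamma>0. curve_length \<gamma>) \<le> B"
    then have short_null: "\<eta> \<in> \<Gamma>0" if "\<eta> \<in> \<Gamma>" "curve_length \<eta> \<le> B" for \<eta>
      using that INF_lower[of \<eta> "\<Gamma> - \<Gamma>0" curve_length] by (meson DiffI order_trans)
    have "Mod M p \<Gamma>' \<le> Mod M p \<Gamma>0"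
      by (rule Mod_mono_minorized) (metis assms(2) short_null order_refl)
    then show False using assms(1) null by simp
  qed
qed

lemma ess_length_lip_curves_ge:
  "ennreal (dist a b - 2 * d) \<le> ess_length M p (lip_curves (cball a d) (cball b d))"
proof -
  have "ennreal (dist a b - 2 * d) \<le> curve_length \<gamma>"
    if "\<gamma> \<in> lip_curves (cball a d) (cball b d)" for \<gamma>
  proof -
    have "dist a (\<gamma> 0) \<le> d" "dist b (\<gamma> 1) \<le> d" using that by (auto simp: lip_curves_def)
    then have "dist a b - 2 * d \<le> dist (\<gamma> 0) (\<gamma> 1)"
      using dist_triangle[of a b "\<gamma> 0"] dist_triangle2[of "\<gamma> 0" b "\<gamma> 1"] by linarith
    then show ?thesis using dist_le_curve_length[of \<gamma>] ennreal_leI order_trans by blast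
  qed
  then show ?thesis
    using Inf_curve_length_le_ess_length by (blast intro: INF_greatest order_trans)
qed

lemma Mod_quasi_geod_balls_pos:
  assumes "metric_measure_space M" "p_thick_geodesic M p" "d > 0" "C > 1"
  shows "0 < Mod M p (quasi_geod_curves (ball a d) (ball b d) C)"
proof -
  have sets: "ball x d \<in> sets M" for x :: 'a
    using assms(1) by (simp add: metric_measure_space_def)
  have "0 < emeasure (completion M) (ball x d)" for x :: 'a
    using assms(1,3) sets[of x] by (simp add: metric_measure_space_def)
  then show ?thesis
    using assms(2,4) sets unfolding p_thick_geodesic_def by (blast intro: sets_completionI_sets)
qed

lemma ess_length_lip_curves_le:
  assumes "metric_measure_space M" "p_thick_geodesic M p" "d > 0"
  shows "ess_length M p (lip_curves (cball a d) (cball b d)) \<le> ennreal ((1 + d) * (dist a b + 2 * d))"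
proof (rule ess_length_le_if_Mod_pos)
  show "0 < Mod M p (quasi_geod_curves (ball a d) (ball b d) (1 + d))"
    using assms by (intro Mod_quasi_geod_balls_pos) auto
  fix \<gamma> assume "\<gamma> \<in> quasi_geod_curves (ball a d) (ball b d) (1 + d)"
  then have \<gamma>: "continuous_on {0..1} \<gamma>" "\<gamma> 0 \<in> ball a d" "\<gamma> 1 \<in> ball b d"
    "curve_length \<gamma> \<le> ennreal ((1 + d) * dist (\<gamma> 0) (\<gamma> 1))"
    by (auto simp: quasi_geod_curves_def)
  then have "curve_length \<gamma> \<noteq> \<infinity>" by (auto simp: top_unique)
  then obtain \<eta> where \<eta>: "\<exists>K. K-lipschitz_on {0..1} \<eta>" "\<eta> 0 = \<gamma> 0" "\<eta> 1 = \<gamma> 1"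
    "curve_length \<eta> = curve_length \<gamma>" "\<And>\<rho>. line_integral \<rho> \<eta> = line_integral \<rho> \<gamma>"
    using lipschitz_reparametrization[OF \<gamma>(1)] by blast
  have "dist (\<gamma> 0) (\<gamma> 1) \<le> dist a b + 2 * d"
    using \<gamma>(2,3) dist_triangle[of "\<gamma> 0" "\<gamma> 1" a] dist_triangle[of a "\<gamma> 1" b]
    by (simp add: dist_commute)
  then have "curve_length \<eta> \<le> ennreal ((1 + d) * (dist a b + 2 * d))"
    using \<gamma>(4) \<eta>(4) assms(3) by (auto intro: order_trans ennreal_leI mult_left_mono)
  moreover have "\<eta> \<in> lip_curves (cball a d) (cball b d)"
    using \<eta> \<gamma> by (auto simp: lip_curves_def)
  ultimately show "\<exists>\<eta>\<in>lip_curves (cball a d) (cball b d).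
      curve_length \<eta> \<le> ennreal ((1 + d) * (dist a b + 2 * d)) \<and>
      (\<forall>\<rho>. line_integral \<rho> \<eta> = line_integral \<rho> \<gamma>)"
    using \<eta>(5) by blast
qed

lemma dp'_eq_dist:
  assumes "metric_measure_space M" "p_thick_geodesic M p"
  shows "dp' M p a b = ennreal (dist a b)"
  unfolding dp'_def
proof (rule tendsto_Lim)
  have "((\<lambda>d. dist a b - 2 * d) \<longlongrightarrow> dist a b - 2 * 0) (at_right 0)"
    "((\<lambda>d. (1 + d) * (dist a b + 2 * d)) \<longlongrightarrow> (1 + 0) * (dist a b + 2 * 0)) (at_right 0)"
    by (intro tendsto_intros)+
  then have lower: "((\<lambda>d. ennreal (dist a b - 2 * d)) \<longlongrightarrow> ennreal (dist a b)) (at_right 0)"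
    and upper: "((\<lambda>d. ennreal ((1 + d) * (dist a b + 2 * d))) \<longlongrightarrow> ennreal (dist a b)) (at_right 0)"
    by (auto intro: tendsto_ennrealI)
  show "((\<lambda>d. ess_length M p (lip_curves (cball a d) (cball b d))) \<longlongrightarrow> ennreal (dist a b))
      (at_right 0)"
    using lower upper
  proof (rule tendsto_sandwich[rotated 2])
    show "\<forall>\<^sub>F d in at_right 0. ennreal (dist a b - 2 * d) \<le> ess_length M p (lip_curves (cball a d) (cball b d))"
      by (simp add: ess_length_lip_curves_ge)
    show "\<forall>\<^sub>F d in at_right 0.
        ess_length M p (lip_curves (cball a d) (cball b d)) \<le> ennreal ((1 + d) * (dist a b + 2 * d))"
      using eventually_at_right_less[of "0::real"]
      by eventually_elim (rule ess_length_lip_curves_le[OF assms])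
  qed
qed simp

lemma dp_eq_dist_if_dp'_eq_dist:
  assumes "\<And>a b. dp' M p a b = ennreal (dist a b)"
  shows "dp M p x y = ennreal (dist x y)"
  unfolding dp_def
proof (rule antisym)
  show "(INF xs \<in> {xs. 2 \<le> length xs \<and> hd xs = x \<and> last xs = y}.
      \<Sum>i<length xs - 1. dp' M p (xs ! i) (xs ! (i + 1))) \<le> ennreal (dist x y)"
    by (rule INF_lower2[of "[x, y]"]) (auto simp: assms)
  show "ennreal (dist x y) \<le> (INF xs \<in> {xs. 2 \<le> length xs \<and> hd xs = x \<and> last xs = y}.
      \<Sum>i<length xs - 1. dp' M p (xs ! i) (xs ! (i + 1)))"
  proof (rule INF_greatest)
    fix xs assume xs: "xs \<in> {xs. 2 \<le> length xs \<and> hd xs = x \<and> last xs = y}"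
    have "(\<Sum>i<length xs - 1. dp' M p (xs ! i) (xs ! (i + 1))) = ennreal (polygon_length id xs)"
      by (simp add: assms sum_dist_eq_polygon_length[of id, simplified])
    moreover have "dist x y \<le> polygon_length id xs"
      using dist_le_polygon_length[of xs id] xs by (cases xs) auto
    ultimately show "ennreal (dist x y) \<le> (\<Sum>i<length xs - 1. dp' M p (xs ! i) (xs ! (i + 1)))"
      by (simp add: ennreal_leI)
  qed
qed

theorem corollary5p10:
  fixes M :: "'a::metric_space measure" and p :: ennreal
  assumes "1 \<le> p"
    and "metric_measure_space M"
    and "infinitesimally_doubling M"
    and "p_thick_geodesic M p"
  shows "\<forall>x y. dp M p x y = ennreal (dist x y)"
  using dp_eq_dist_if_dp'_eq_dist dp'_eq_dist[OF assms(2,4)] by blast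

end
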